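(* Let $\varepsilon>0$ and $q\in(0,1)$, and fix a real number $\sigma$. Then there exist constants $C>0$ and $V_0>0$, depending only on $\varepsilon$, $q$ and $\sigma$, such that for every real $v$ with $|v|\ge V_0$ for which $s=\sigma+iv$ satisfies $\inf_{r\in\mathbb{Z}_{\ge -1}}|1-q^{r+s}|>\varepsilon$, we have $$|\zeta_q(s)|\le \begin{cases} C & (\sigma>1),\\ C\,|v| & (\sigma=1),\\ C\exp\left(-(\sigma-1)(1+\pi/2)\,|v|\right) & (\sigma<1).\end{cases}$$
   Context: For $q\in(0,1)$ and a positive integer $m$, the $q$-integer is $[m]_q=\frac{1-q^m}{1-q}$, and $q^{w}=e^{w\log q}$ for complex $w$. The two-variable $q$-zeta function is $\zeta_q(s,t)=\sum_{m=1}^\infty \frac{q^{mt}}{[m]_q^s}$, absolutely convergent for $s\in\mathbb{C}$, $\Re(t)>0$, and meromorphically continued to $\mathbb{C}^2$ (simple poles at $t\in\{a+2\pi i b/\log q: a,b\in\mathbb{Z}, a\le0\}$). The $q$-analogue of the Riemann zeta function is $\zeta_q(s)=\zeta_q(s,s-1)$ (via this continuation). *)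

theory Defs
  imports "HOL-Analysis.Analysis"
begin

definition qpow :: "real \<Rightarrow> complex \<Rightarrow> complex" where
  "qpow q w = exp (w * of_real (ln q))"

definition qint :: "real \<Rightarrow> nat \<Rightarrow> real" where
  "qint q m = (1 - q ^ m) / (1 - q)"

text \<open>The defining series sum_{m>=1} q^(m t) / [m]_q^s (with [m]_q^s = exp(s log [m]_q)),
  absolutely convergent for Re t > 0.\<close>
definition zeta_q2_series :: "real \<Rightarrow> complex \<Rightarrow> complex \<Rightarrow> complex" where
  "zeta_q2_series q s t =
     (\<Sum>m. qpow q (of_nat (Suc m) * t) / exp (s * of_real (ln (qint q (Suc m)))))"

definition zq_poles :: "real \<Rightarrow> complex set" where
  "zq_poles q = {of_int a + 2 * of_real pi * \<i> * of_int b / of_real (ln q) | a b :: int. a \<le> 0}"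

text \<open>Two-variable q-zeta function via its (unique) meromorphic continuation in t:
  for fixed s, the value at t is that of the holomorphic function on the complement of
  the pole set agreeing with the series on Re t > 0.\<close>
definition zeta_q2 :: "real \<Rightarrow> complex \<Rightarrow> complex \<Rightarrow> complex" where
  "zeta_q2 q s t = (THE z. \<exists>f. f holomorphic_on (- zq_poles q) \<and>
       (\<forall>t'. Re t' > 0 \<longrightarrow> f t' = zeta_q2_series q s t') \<and> f t = z)"

definition zeta_q :: "real \<Rightarrow> complex \<Rightarrow> complex" where
  "zeta_q q s = zeta_q2 q s (s - 1)"

end

theory Submission
  imports Defs "HOL-Complex_Analysis.Complex_Analysis"
begin

text \<open>
  Since [m]_q^(-s) = (1 - q)^s (1 - q^m)^(-s), expanding (1 - q^m)^(-s) by the binomial series up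
  to order N turns the first N terms of the series defining zeta_q(s, t) into geometric series
  sum_m q^(m (t + k)) = q^(t + k) / (1 - q^(t + k)); the Taylor remainder is O(q^(m N)), so what is
  left converges for Re t > -N. This gives the continuation to Re t > -N explicitly, and by the
  identity theorem it is the function of the definition.

  At t = s - 1 with N > 1 - sigma, the hypothesis keeps every denominator 1 - q^(t + k) at distance
  more than epsilon from 0; up to factors whose modulus depends only on sigma, v = Im s then enters
  only through the Pochhammer symbols (s)_k, k <= N, which are O(|v|^N). So zeta_q(sigma + i v) = O(|v|^N) on vertical lines: this is O(|v|)
  for sigma = 1 and O(exp(delta |v|)) for every delta > 0, in particular for
  delta = (1 - sigma)(1 + pi/2) when sigma < 1. For sigma > 1 the series is bounded directly.
\<close>

lemma norm_qpow: "cmod (qpow q w) = exp (Re w * ln q)"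
  unfolding qpow_def by simp

lemma qpow_eq_1_iff:
  assumes "0 < q" "q < 1"
  shows "qpow q w = 1 \<longleftrightarrow> Re w = 0 \<and> Im w * ln q / (2 * pi) \<in> \<int>"
proof -
  have "ln q \<noteq> 0"
    using assms by simp
  have "Im w * ln q / (2 * pi) \<in> \<int> \<longleftrightarrow> (\<exists>n::int. Im w * ln q = of_int (2 * n) * pi)"
    by (auto elim!: Ints_cases simp: field_simps)
  with \<open>ln q \<noteq> 0\<close> show ?thesis
    unfolding qpow_def exp_eq_1 by simp
qed

lemma zq_poles_iff:
  assumes "0 < q" "q < 1"
  shows "t \<in> zq_poles q \<longleftrightarrow> Re t \<in> \<int> \<and> Re t \<le> 0 \<and> Im t * ln q / (2 * pi) \<in> \<int>"
proof -
  have "ln q \<noteq> 0"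
    using assms by simp
  have Re: "Re (of_int a + 2 * of_real pi * \<i> * of_int b / of_real (ln q)) = of_int a"
    and Im: "Im (of_int a + 2 * of_real pi * \<i> * of_int b / of_real (ln q)) = 2 * pi * of_int b / ln q"
    for a b :: int
    by (simp_all add: Re_divide Im_divide power2_eq_square)
  show ?thesis
  proof
    assume "t \<in> zq_poles q"
    then show "Re t \<in> \<int> \<and> Re t \<le> 0 \<and> Im t * ln q / (2 * pi) \<in> \<int>"
      using \<open>ln q \<noteq> 0\<close> unfolding zq_poles_def by (auto simp: Re Im)
  next
    assume "Re t \<in> \<int> \<and> Re t \<le> 0 \<and> Im t * ln q / (2 * pi) \<in> \<int>"
    then obtain a b where "Re t = of_int a" "a \<le> 0" "Im t * ln q / (2 * pi) = of_int b"
      by (metis Ints_cases of_int_le_0_iff)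
    moreover from this have "Im t = 2 * pi * of_int b / ln q"
      using \<open>ln q \<noteq> 0\<close> by (simp add: field_simps)
    ultimately show "t \<in> zq_poles q"
      unfolding zq_poles_def by (auto simp: complex_eq_iff Re Im)
  qed
qed

lemma zq_poles_iff_qpow_eq_1:
  assumes "0 < q" "q < 1"
  shows "t \<in> zq_poles q \<longleftrightarrow> (\<exists>n::nat. qpow q (t + of_nat n) = 1)"
proof -
  have "Re t \<in> \<int> \<and> Re t \<le> 0 \<longleftrightarrow> (\<exists>n::nat. Re t + n = 0)"
  proof
    assume "Re t \<in> \<int> \<and> Re t \<le> 0"
    then obtain a where "Re t = of_int a" "a \<le> 0"
      by (auto elim!: Ints_cases)
    then show "\<exists>n::nat. Re t + n = 0"
      by (intro exI[of _ "nat (- a)"]) simp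
  next
    assume "\<exists>n::nat. Re t + n = 0"
    then obtain n :: nat where "Re t + n = 0" ..
    then have "Re t = - of_nat n"
      by linarith
    then show "Re t \<in> \<int> \<and> Re t \<le> 0"
      by simp
  qed
  then show ?thesis
    unfolding zq_poles_iff[OF assms] qpow_eq_1_iff[OF assms] by auto
qed

lemma Re_pos_notin_zq_poles: "0 < q \<Longrightarrow> q < 1 \<Longrightarrow> Re t > 0 \<Longrightarrow> t \<notin> zq_poles q"
  by (simp add: zq_poles_iff)

lemma closed_zq_poles:
  assumes "0 < q" "q < 1"
  shows "closed (zq_poles q)"
proof -
  have "zq_poles q = (Re -` \<int>) \<inter> {t. Re t \<le> 0} \<inter> ((\<lambda>t. Im t * ln q / (2 * pi)) -` \<int>)"
    using zq_poles_iff[OF assms] by auto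
  also have "closed \<dots>"
    by (intro closed_Int continuous_closed_vimage closed_Ints closed_Collect_le continuous_intros)
      (auto intro: isCont_Re isCont_Im)
  finally show ?thesis .
qed

lemma countable_zq_poles: "countable (zq_poles q)"
proof -
  have "zq_poles q \<subseteq>
      (\<lambda>(a, b). of_int a + 2 * of_real pi * \<i> * of_int b / of_real (ln q)) ` (UNIV :: (int \<times> int) set)"
    unfolding zq_poles_def by auto
  then show ?thesis
    by (rule countable_subset) simp
qed

lemma holomorphic_eq_off_zq_poles:
  assumes q: "0 < q" "q < 1"
    and U: "open U" "convex U" "{t. Re t > 0} \<subseteq> U"
    and f: "f holomorphic_on U - zq_poles q" and g: "g holomorphic_on U - zq_poles q"
    and eq: "\<And>t. Re t > 0 \<Longrightarrow> f t = g t"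
    and t: "t \<in> U - zq_poles q"
  shows "f t = g t"
proof (rule analytic_continuation_open[of "{t. Re t > 0}" "U - zq_poles q" f g])
  show "open (U - zq_poles q)"
    using U(1) closed_zq_poles[OF q] by blast
  show "connected (U - zq_poles q)"
    using U(1,2) by (intro connected_open_diff_countable countable_zq_poles convex_connected) auto
  show "{t. Re t > 0} \<subseteq> U - zq_poles q"
    using U(3) Re_pos_notin_zq_poles[OF q] by blast
  show "{t. Re t > 0} \<noteq> {}"
    by (auto intro!: exI[of _ 1])
qed (use f g eq t in \<open>auto simp: open_halfspace_Re_gt\<close>)

lemma zeta_q2_eqI:
  assumes q: "0 < q" "q < 1"
    and f: "f holomorphic_on - zq_poles q"
    and series: "\<And>t. Re t > 0 \<Longrightarrow> f t = zeta_q2_series q s t"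
    and t: "t \<notin> zq_poles q"
  shows "zeta_q2 q s t = f t"
  unfolding zeta_q2_def
proof (rule the_equality)
  fix z
  assume "\<exists>g. g holomorphic_on - zq_poles q \<and> (\<forall>t'. 0 < Re t' \<longrightarrow> g t' = zeta_q2_series q s t') \<and> g t = z"
  then obtain g where "g holomorphic_on UNIV - zq_poles q" "\<And>t'. 0 < Re t' \<Longrightarrow> g t' = f t'" "g t = z"
    using series by (auto simp: Compl_eq_Diff_UNIV)
  with f t show "z = f t"
    using holomorphic_eq_off_zq_poles[OF q, of UNIV g f t] by (simp add: Compl_eq_Diff_UNIV)
qed (use f series in blast)

definition binomial_remainder :: "complex \<Rightarrow> nat \<Rightarrow> real \<Rightarrow> complex" where
  "binomial_remainder s N x =
     exp (- s * of_real (ln (1 - x))) - (\<Sum>i<N. pochhammer s i * of_real x ^ i / fact i)"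

lemma has_field_derivative_pochhammer_mult_power:
  fixes s z :: complex
  assumes z: "1 - z \<notin> \<real>\<^sub>\<le>\<^sub>0"
  shows "((\<lambda>z. pochhammer s i * exp (- (s + of_nat i) * ln (1 - z))) has_field_derivative
           pochhammer s (Suc i) * exp (- (s + of_nat (Suc i)) * ln (1 - z))) (at z)"
proof -
  have "1 - z \<noteq> 0"
    using z by auto
  have "((\<lambda>z. 1 - z) has_field_derivative -1) (at z)"
    by (auto intro!: derivative_eq_intros)
  from DERIV_chain2[OF has_field_derivative_Ln[OF z] this]
  have Ln_deriv: "((\<lambda>z. ln (1 - z)) has_field_derivative - inverse (1 - z)) (at z)"
    by simp
  have "exp (- (s + of_nat (Suc i)) * ln (1 - z)) =
      exp (- (s + of_nat i) * ln (1 - z)) * exp (- ln (1 - z))"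
    by (simp add: exp_add[symmetric] algebra_simps)
  moreover have "exp (- ln (1 - z)) = inverse (1 - z)"
    using \<open>1 - z \<noteq> 0\<close> by (simp add: exp_minus)
  ultimately have exp_Suc: "exp (- (s + of_nat (Suc i)) * ln (1 - z)) =
      exp (- (s + of_nat i) * ln (1 - z)) * inverse (1 - z)"
    by simp
  show ?thesis
    using Ln_deriv exp_Suc z by (auto intro!: derivative_eq_intros simp: pochhammer_Suc algebra_simps)
qed

definition binomial_remainder_coeff :: "real \<Rightarrow> complex \<Rightarrow> nat \<Rightarrow> real" where
  "binomial_remainder_coeff q s n =
     cmod (pochhammer s (Suc n)) * exp (\<bar>Re s + Suc n\<bar> * - ln (1 - q)) / fact n"

lemma norm_binomial_remainder_le:
  assumes q: "0 < q" "q < 1" and x: "0 \<le> x" "x \<le> q"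
  shows "cmod (binomial_remainder s (Suc n) x) \<le> binomial_remainder_coeff q s n * x ^ Suc n"
proof -
  define f where "f i z = pochhammer s i * exp (- (s + of_nat i) * ln (1 - z))" for i z
  define S where "S = complex_of_real ` {0..q}"
  define B where "B = cmod (pochhammer s (Suc n)) * exp (\<bar>Re s + Suc n\<bar> * - ln (1 - q))"
  have "cmod (f 0 (of_real x) - (\<Sum>i\<le>n. f i 0 * (of_real x - 0) ^ i / fact i))
          \<le> B * cmod (of_real x - 0) ^ Suc n / fact n"
  proof (rule complex_Taylor)
    show "convex S"
      unfolding S_def
      by (rule convex_linear_image) (auto intro: bounded_linear.linear bounded_linear_of_real)
    show "0 \<in> S" "complex_of_real x \<in> S"
      unfolding S_def using x q by auto
  next
    fix i z
    assume "z \<in> S"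
    then have "1 - z \<notin> \<real>\<^sub>\<le>\<^sub>0"
      using q unfolding S_def by (auto simp: complex_nonpos_Reals_iff)
    then show "(f i has_field_derivative f (Suc i) z) (at z within S)"
      unfolding f_def
      by (rule has_field_derivative_at_within[OF has_field_derivative_pochhammer_mult_power])
  next
    fix z
    assume "z \<in> S"
    then obtain y where y: "z = of_real y" "0 \<le> y" "y \<le> q"
      unfolding S_def by auto
    have "- (Re s + Suc n) * ln (1 - y) \<le> \<bar>Re s + Suc n\<bar> * \<bar>ln (1 - y)\<bar>"
      by (metis abs_ge_self abs_minus_cancel abs_mult minus_mult_left)
    also have "\<dots> \<le> \<bar>Re s + Suc n\<bar> * - ln (1 - q)"
      using y q by (intro mult_left_mono) auto
    finally have "- (Re s + Suc n) * ln (1 - y) \<le> \<bar>Re s + Suc n\<bar> * - ln (1 - q)" .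
    moreover have "ln (1 - z) = of_real (ln (1 - y))"
      using y q by (simp add: Ln_of_real[symmetric])
    ultimately show "cmod (f (Suc n) z) \<le> B"
      unfolding f_def B_def by (simp add: norm_mult mult_left_mono)
  qed
  moreover have "f 0 (of_real x) = exp (- s * of_real (ln (1 - x)))"
    using x q by (simp add: f_def Ln_of_real[symmetric])
  moreover have "f i 0 = pochhammer s i" for i
    by (simp add: f_def)
  ultimately show ?thesis
    unfolding binomial_remainder_def binomial_remainder_coeff_def B_def using x
    by (simp add: lessThan_Suc_atMost norm_power)
qed

lemma geometric_sums_Suc:
  fixes c :: "'a :: real_normed_field"
  assumes "norm c < 1"
  shows "(\<lambda>n. c ^ Suc n) sums (c / (1 - c))"
  using sums_mult[OF geometric_sums[OF assms], of c] by (simp add: divide_inverse)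

definition zeta_q2_tail_term :: "real \<Rightarrow> complex \<Rightarrow> nat \<Rightarrow> nat \<Rightarrow> complex \<Rightarrow> complex" where
  "zeta_q2_tail_term q s N m t = qpow q (of_nat (Suc m) * t) * binomial_remainder s N (q ^ Suc m)"

definition zeta_q2_tail :: "real \<Rightarrow> complex \<Rightarrow> nat \<Rightarrow> complex \<Rightarrow> complex" where
  "zeta_q2_tail q s N t = (\<Sum>m. zeta_q2_tail_term q s N m t)"

definition zeta_q2_geometric_part :: "real \<Rightarrow> complex \<Rightarrow> nat \<Rightarrow> complex \<Rightarrow> complex" where
  "zeta_q2_geometric_part q s N t =
     (\<Sum>k<N. pochhammer s k / fact k * (qpow q (t + of_nat k) / (1 - qpow q (t + of_nat k))))"

definition zeta_q2_expansion :: "real \<Rightarrow> complex \<Rightarrow> nat \<Rightarrow> complex \<Rightarrow> complex" where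
  "zeta_q2_expansion q s N t =
     exp (s * of_real (ln (1 - q))) * (zeta_q2_geometric_part q s N t + zeta_q2_tail q s N t)"

lemma norm_zeta_q2_tail_term_le:
  assumes q: "0 < q" "q < 1" and a: "a \<le> Re t"
  shows "cmod (zeta_q2_tail_term q s (Suc n) m t) \<le>
    binomial_remainder_coeff q s n * exp ((a + Suc n) * ln q) ^ Suc m"
proof -
  have "ln q < 0"
    using q by simp
  have x: "0 \<le> q ^ Suc m" "q ^ Suc m \<le> q"
    using q by (auto intro: power_le_imp_le_base simp: power_le_one)
  have "cmod (qpow q (of_nat (Suc m) * t)) = exp (real (Suc m) * (Re t * ln q))"
    by (simp add: norm_qpow mult_ac)
  also have "\<dots> \<le> exp (real (Suc m) * (a * ln q))"
    using a \<open>ln q < 0\<close> by (simp add: mult_right_mono_neg)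
  finally have "cmod (qpow q (of_nat (Suc m) * t)) \<le> exp (real (Suc m) * (a * ln q))" .
  moreover have "(q ^ Suc m) ^ Suc n = exp (real (Suc m * Suc n) * ln q)"
    using q by (simp only: exp_of_nat_mult exp_ln power_mult)
  ultimately have "cmod (zeta_q2_tail_term q s (Suc n) m t) \<le>
      exp (real (Suc m) * (a * ln q)) *
        (binomial_remainder_coeff q s n * exp (real (Suc m * Suc n) * ln q))"
    unfolding zeta_q2_tail_term_def norm_mult
    using norm_binomial_remainder_le[OF q x, of s n] by (intro mult_mono) auto
  also have "\<dots> = binomial_remainder_coeff q s n * exp (real (Suc m) * ((a + Suc n) * ln q))"
    by (simp add: exp_add[symmetric] algebra_simps)
  also have "\<dots> = binomial_remainder_coeff q s n * exp ((a + Suc n) * ln q) ^ Suc m"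
    by (simp only: exp_of_nat_mult)
  finally show ?thesis .
qed

lemma zeta_q2_tail_bound_sums:
  fixes a :: real
  assumes q: "0 < q" "q < 1" and a: "a + Suc n > 0"
  defines "\<rho> \<equiv> exp ((a + Suc n) * ln q)"
  shows "(\<lambda>m. binomial_remainder_coeff q s n * \<rho> ^ Suc m) sums
           (binomial_remainder_coeff q s n * (\<rho> / (1 - \<rho>)))"
proof -
  have "\<rho> < 1"
    unfolding \<rho>_def using a q by (simp add: mult_pos_neg)
  then show ?thesis
    by (intro sums_mult geometric_sums_Suc) (simp add: \<rho>_def)
qed

lemma summable_zeta_q2_tail:
  assumes q: "0 < q" "q < 1" and t: "Re t + Suc n > 0"
  shows "summable (\<lambda>m. zeta_q2_tail_term q s (Suc n) m t)"
  by (rule summable_comparison_test'[OF sums_summable[OF zeta_q2_tail_bound_sums[OF q t]]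
        norm_zeta_q2_tail_term_le[OF q order.refl]])

lemma holomorphic_on_zeta_q2_tail:
  assumes q: "0 < q" "q < 1"
  shows "zeta_q2_tail q s (Suc n) holomorphic_on {t. Re t > - real (Suc n)}"
  unfolding zeta_q2_tail_def
proof (rule holomorphic_uniform_sequence[where f="\<lambda>k t. \<Sum>m<k. zeta_q2_tail_term q s (Suc n) m t"])
  show "open {t. Re t > - real (Suc n)}"
    by (simp add: open_halfspace_Re_gt)
  show "(\<lambda>t. \<Sum>m<k. zeta_q2_tail_term q s (Suc n) m t) holomorphic_on {t. Re t > - real (Suc n)}" for k
    unfolding zeta_q2_tail_term_def qpow_def by (intro holomorphic_intros)
next
  fix x
  assume x: "x \<in> {t. Re t > - real (Suc n)}"
  define d where "d = (Re x + Suc n) / 2"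
  have "d > 0" "Re x - d + Suc n > 0"
    using x by (simp_all add: d_def field_simps)
  have Re_ge: "Re x - d \<le> Re t" if "t \<in> cball x d" for t
    using that abs_Re_le_cmod[of "x - t"] by (simp add: dist_norm)
  then have "cball x d \<subseteq> {t. Re t > - real (Suc n)}"
    using \<open>Re x - d + Suc n > 0\<close> by fastforce
  moreover have "uniform_limit (cball x d) (\<lambda>k t. \<Sum>m<k. zeta_q2_tail_term q s (Suc n) m t)
      (\<lambda>t. \<Sum>m. zeta_q2_tail_term q s (Suc n) m t) sequentially"
    using zeta_q2_tail_bound_sums[OF q \<open>Re x - d + Suc n > 0\<close>]
    by (intro Weierstrass_m_test[OF norm_zeta_q2_tail_term_le[OF q Re_ge]] sums_summable)
  ultimately show "\<exists>d>0. cball x d \<subseteq> {t. Re t > - real (Suc n)} \<and>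
      uniform_limit (cball x d) (\<lambda>k t. \<Sum>m<k. zeta_q2_tail_term q s (Suc n) m t)
        (\<lambda>t. \<Sum>m. zeta_q2_tail_term q s (Suc n) m t) sequentially"
    using \<open>d > 0\<close> by blast
qed

lemma holomorphic_on_zeta_q2_expansion:
  assumes q: "0 < q" "q < 1"
  shows "zeta_q2_expansion q s (Suc n) holomorphic_on {t. Re t > - real (Suc n)} - zq_poles q"
proof -
  have "1 - qpow q (t + of_nat k) \<noteq> 0" if "t \<notin> zq_poles q" for t k
    using that zq_poles_iff_qpow_eq_1[OF q] by auto
  then have geometric_part:
      "zeta_q2_geometric_part q s (Suc n) holomorphic_on {t. Re t > - real (Suc n)} - zq_poles q"
    unfolding zeta_q2_geometric_part_def qpow_def by (intro holomorphic_intros) (auto simp: qpow_def)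
  have tail: "zeta_q2_tail q s (Suc n) holomorphic_on {t. Re t > - real (Suc n)} - zq_poles q"
    by (rule holomorphic_on_subset[OF holomorphic_on_zeta_q2_tail[OF q]]) auto
  show ?thesis
    unfolding zeta_q2_expansion_def
    by (rule holomorphic_on_mult[OF holomorphic_on_const holomorphic_on_add[OF geometric_part tail]])
qed

lemma zeta_q2_series_term_eq:
  assumes q: "0 < q" "q < 1"
  shows "qpow q (of_nat (Suc m) * t) / exp (s * of_real (ln (qint q (Suc m)))) =
    exp (s * of_real (ln (1 - q))) *
      ((\<Sum>k<N. pochhammer s k / fact k * qpow q (t + of_nat k) ^ Suc m) + zeta_q2_tail_term q s N m t)"
proof -
  define x where "x = q ^ Suc m"
  have "x < 1"
    unfolding x_def using q by (intro power_Suc_less_one) auto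
  moreover have "0 < x"
    unfolding x_def using q by simp
  ultimately have ln_qint: "ln (qint q (Suc m)) = ln (1 - x) - ln (1 - q)"
    unfolding qint_def x_def[symmetric] using q by (simp add: ln_div)
  have "- (s * of_real (ln (qint q (Suc m)))) = s * of_real (ln (1 - q)) + - s * of_real (ln (1 - x))"
    unfolding ln_qint by (simp add: algebra_simps)
  then have "1 / exp (s * of_real (ln (qint q (Suc m)))) =
      exp (s * of_real (ln (1 - q))) * exp (- s * of_real (ln (1 - x)))"
    by (simp add: exp_minus[symmetric] exp_add[symmetric] divide_inverse)
  also have "exp (- s * of_real (ln (1 - x))) =
      binomial_remainder s N x + (\<Sum>k<N. pochhammer s k * of_real x ^ k / fact k)"
    unfolding binomial_remainder_def by simp
  finally have inverse_qint: "1 / exp (s * of_real (ln (qint q (Suc m)))) =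
      exp (s * of_real (ln (1 - q))) *
        (binomial_remainder s N x + (\<Sum>k<N. pochhammer s k * of_real x ^ k / fact k))" .
  have "of_real x = qpow q 1 ^ Suc m"
    unfolding x_def qpow_def using q by (simp add: exp_of_real)
  then have qpow_power:
      "qpow q (t + of_nat k) ^ Suc m = qpow q (of_nat (Suc m) * t) * of_real x ^ k" for k
    unfolding qpow_def by (simp add: exp_of_nat_mult[symmetric] exp_add[symmetric] algebra_simps)
  show ?thesis
    unfolding zeta_q2_tail_term_def x_def[symmetric] qpow_power
    by (subst divide_inverse, subst inverse_eq_divide, subst inverse_qint)
      (simp add: algebra_simps sum_distrib_left sum_distrib_right)
qed

lemma zeta_q2_series_eq_expansion:
  assumes q: "0 < q" "q < 1" and t: "Re t > 0"
  shows "zeta_q2_series q s t = zeta_q2_expansion q s (Suc n) t"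
proof -
  have "(\<lambda>m. qpow q (t + of_nat k) ^ Suc m) sums (qpow q (t + of_nat k) / (1 - qpow q (t + of_nat k)))"
    for k
  proof (rule geometric_sums_Suc)
    have "Re (t + of_nat k) * ln q < 0"
      using t q by (simp add: mult_pos_neg add_pos_nonneg)
    then show "norm (qpow q (t + of_nat k)) < 1"
      by (simp add: norm_qpow)
  qed
  moreover have "(\<lambda>m. zeta_q2_tail_term q s (Suc n) m t) sums zeta_q2_tail q s (Suc n) t"
    unfolding zeta_q2_tail_def using t by (intro summable_sums summable_zeta_q2_tail[OF q]) simp
  ultimately have "(\<lambda>m. qpow q (of_nat (Suc m) * t) / exp (s * of_real (ln (qint q (Suc m)))))
      sums zeta_q2_expansion q s (Suc n) t"
    unfolding zeta_q2_series_term_eq[OF q, where N="Suc n"]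
      zeta_q2_expansion_def zeta_q2_geometric_part_def
    by (intro sums_mult sums_add sums_sum)
  then show ?thesis
    unfolding zeta_q2_series_def by (simp add: sums_iff)
qed

lemma zeta_q2_expansion_eq:
  assumes q: "0 < q" "q < 1" and "n \<le> n'" and t: "t \<in> {t. Re t > - real (Suc n)} - zq_poles q"
  shows "zeta_q2_expansion q s (Suc n) t = zeta_q2_expansion q s (Suc n') t"
proof (rule holomorphic_eq_off_zq_poles[OF q _ _ _ _ _ _ t])
  show "zeta_q2_expansion q s (Suc n) holomorphic_on {t. Re t > - real (Suc n)} - zq_poles q"
    by (rule holomorphic_on_zeta_q2_expansion[OF q])
  show "zeta_q2_expansion q s (Suc n') holomorphic_on {t. Re t > - real (Suc n)} - zq_poles q"
    by (rule holomorphic_on_subset[OF holomorphic_on_zeta_q2_expansion[OF q]]) (use \<open>n \<le> n'\<close> in auto)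
qed (auto simp: open_halfspace_Re_gt convex_halfspace_Re_gt zeta_q2_series_eq_expansion[OF q, symmetric])

text \<open>By the previous lemma every \<open>N > - Re t\<close> gives the same value; this takes the least.\<close>
definition zeta_q2_cont :: "real \<Rightarrow> complex \<Rightarrow> complex \<Rightarrow> complex" where
  "zeta_q2_cont q s t = zeta_q2_expansion q s (Suc (nat \<lfloor>- Re t\<rfloor>)) t"

lemma zeta_q2_cont_eq_expansion:
  assumes q: "0 < q" "q < 1" and t: "t \<in> {t. Re t > - real (Suc n)} - zq_poles q"
  shows "zeta_q2_cont q s t = zeta_q2_expansion q s (Suc n) t"
proof -
  define n' where "n' = nat \<lfloor>- Re t\<rfloor>"
  have t': "t \<in> {t. Re t > - real (Suc n')} - zq_poles q"
    using t unfolding n'_def by auto linarith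
  show ?thesis
    unfolding zeta_q2_cont_def n'_def[symmetric]
    using zeta_q2_expansion_eq[OF q _ t] zeta_q2_expansion_eq[OF q _ t'] by (cases "n \<le> n'") auto
qed

lemma holomorphic_on_zeta_q2_cont:
  assumes q: "0 < q" "q < 1"
  shows "zeta_q2_cont q s holomorphic_on - zq_poles q"
proof -
  have "zeta_q2_cont q s field_differentiable at t" if t: "t \<notin> zq_poles q" for t
  proof -
    define U where "U = {u. Re u > - real (Suc (nat \<lfloor>- Re t\<rfloor>))} - zq_poles q"
    have "open U" "t \<in> U"
      unfolding U_def using t closed_zq_poles[OF q] by (auto simp: open_halfspace_Re_gt) linarith
    then obtain f' where "(zeta_q2_expansion q s (Suc (nat \<lfloor>- Re t\<rfloor>)) has_field_derivative f') (at t)"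
      using holomorphic_on_imp_differentiable_at[OF holomorphic_on_zeta_q2_expansion[OF q]]
      unfolding U_def field_differentiable_def by blast
    then have "(zeta_q2_cont q s has_field_derivative f') (at t)"
      by (rule has_field_derivative_transform_within_open[OF _ \<open>open U\<close> \<open>t \<in> U\<close>])
        (simp add: U_def zeta_q2_cont_eq_expansion[OF q, where n="nat \<lfloor>- Re t\<rfloor>"])
    then show ?thesis
      unfolding field_differentiable_def by blast
  qed
  then show ?thesis
    unfolding holomorphic_on_def using field_differentiable_at_within by blast
qed

lemma zeta_q2_eq_expansion:
  assumes q: "0 < q" "q < 1" and t: "t \<in> {t. Re t > - real (Suc n)} - zq_poles q"
  shows "zeta_q2 q s t = zeta_q2_expansion q s (Suc n) t"
proof -
  have "zeta_q2 q s t = zeta_q2_cont q s t"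
    using t by (intro zeta_q2_eqI[OF q holomorphic_on_zeta_q2_cont[OF q]])
      (auto simp: zeta_q2_cont_def zeta_q2_series_eq_expansion[OF q, where n=0])
  with zeta_q2_cont_eq_expansion[OF q t] show ?thesis
    by simp
qed

lemma zeta_q2_eq_series:
  assumes q: "0 < q" "q < 1" and t: "Re t > 0"
  shows "zeta_q2 q s t = zeta_q2_series q s t"
  using zeta_q2_eq_expansion[OF q, of t 0 s] zeta_q2_series_eq_expansion[OF q t, of s 0]
    Re_pos_notin_zq_poles[OF q t] t by simp

lemma norm_zeta_q2_series_le:
  assumes q: "0 < q" "q < 1" and t: "Re t > 0" and s: "Re s \<ge> 0"
  defines "\<rho> \<equiv> exp (Re t * ln q)"
  shows "cmod (zeta_q2_series q s t) \<le> \<rho> / (1 - \<rho>)"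
proof -
  have "\<rho> < 1"
    unfolding \<rho>_def using q t by (simp add: mult_pos_neg)
  have term_le:
      "cmod (qpow q (of_nat (Suc m) * t) / exp (s * of_real (ln (qint q (Suc m))))) \<le> \<rho> ^ Suc m" for m
  proof -
    have "q ^ Suc m \<le> q"
      using q by (intro power_Suc_le_self) auto
    then have "qint q (Suc m) \<ge> 1"
      using q unfolding qint_def by simp
    then have "1 \<le> exp (Re s * ln (qint q (Suc m)))"
      using s by simp
    then have "\<rho> ^ Suc m / exp (Re s * ln (qint q (Suc m))) \<le> \<rho> ^ Suc m / 1"
      by (intro divide_left_mono) (auto simp: \<rho>_def)
    moreover have "cmod (qpow q (of_nat (Suc m) * t)) = exp (real (Suc m) * (Re t * ln q))"
      by (simp add: norm_qpow mult_ac)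
    then have "cmod (qpow q (of_nat (Suc m) * t)) = \<rho> ^ Suc m"
      unfolding \<rho>_def by (simp only: exp_of_nat_mult)
    ultimately show ?thesis
      by (simp add: norm_divide)
  qed
  have geometric: "(\<lambda>m. \<rho> ^ Suc m) sums (\<rho> / (1 - \<rho>))"
    using \<open>\<rho> < 1\<close> by (intro geometric_sums_Suc) (simp add: \<rho>_def)
  have "cmod (zeta_q2_series q s t) \<le> (\<Sum>m. \<rho> ^ Suc m)"
    unfolding zeta_q2_series_def by (rule norm_suminf_le[OF term_le sums_summable[OF geometric]])
  also have "\<dots> = \<rho> / (1 - \<rho>)"
    by (rule sums_unique[OF geometric, symmetric])
  finally show ?thesis .
qed

lemma norm_zeta_q2_tail_le:
  assumes q: "0 < q" "q < 1" and t: "Re t + Suc n > 0"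
  defines "\<rho> \<equiv> exp ((Re t + Suc n) * ln q)"
  shows "cmod (zeta_q2_tail q s (Suc n) t) \<le> binomial_remainder_coeff q s n * (\<rho> / (1 - \<rho>))"
  using norm_suminf_le[OF norm_zeta_q2_tail_term_le[OF q order.refl]
      sums_summable[OF zeta_q2_tail_bound_sums[OF q t]]]
    sums_unique[OF zeta_q2_tail_bound_sums[OF q t]]
  unfolding zeta_q2_tail_def \<rho>_def by simp

lemma norm_pochhammer_le_power:
  fixes s :: complex
  assumes "k \<le> N" "cmod s \<le> Y"
  shows "cmod (pochhammer s k) \<le> (Y + N) ^ N"
proof -
  have "Y \<ge> 0"
    using assms(2) norm_ge_zero order_trans by blast
  have "cmod (pochhammer s k) = (\<Prod>i<k. cmod (s + of_nat i))"
    by (simp add: pochhammer_prod prod_norm atLeast0LessThan)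
  also have "\<dots> \<le> (\<Prod>i<k. Y + N)"
    using assms by (intro prod_mono) (auto intro: order_trans[OF norm_triangle_ineq])
  also have "\<dots> = (Y + N) ^ k"
    by simp
  also have "\<dots> \<le> (Y + N) ^ N"
    using assms(1) \<open>Y \<ge> 0\<close> by (cases "N = 0") (auto intro: power_increasing)
  finally show ?thesis .
qed

lemma norm_zeta_q2_geometric_part_le:
  fixes \<epsilon> Y :: real
  assumes "\<epsilon> > 0" and away: "\<And>k. k \<le> n \<Longrightarrow> \<epsilon> \<le> cmod (1 - qpow q (t + of_nat k))"
    and Y: "cmod s \<le> Y"
  shows "cmod (zeta_q2_geometric_part q s (Suc n) t)
    \<le> (Y + Suc n) ^ Suc n * ((\<Sum>k<Suc n. exp ((Re t + k) * ln q)) / \<epsilon>)"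
proof -
  let ?P = "(Y + Suc n) ^ Suc n"
  have "Y \<ge> 0"
    using Y norm_ge_zero order_trans by blast
  then have "?P \<ge> 0"
    by (intro zero_le_power) simp
  have "cmod (pochhammer s k / fact k * (qpow q (t + of_nat k) / (1 - qpow q (t + of_nat k))))
      \<le> ?P * (exp ((Re t + k) * ln q) / \<epsilon>)" if "k \<in> {..<Suc n}" for k
  proof -
    have "cmod (pochhammer s k / fact k) \<le> cmod (pochhammer s k)"
      by (simp add: norm_divide divide_le_eq mult_le_cancel_left1)
    also have "\<dots> \<le> ?P"
      by (rule norm_pochhammer_le_power[OF _ Y]) (use that in simp)
    finally show ?thesis
      using away[of k] that \<open>\<epsilon> > 0\<close> \<open>?P \<ge> 0\<close> unfolding norm_mult norm_divide norm_qpow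
      by (intro mult_mono frac_le) auto
  qed
  then have "cmod (zeta_q2_geometric_part q s (Suc n) t)
      \<le> (\<Sum>k<Suc n. ?P * (exp ((Re t + k) * ln q) / \<epsilon>))"
    unfolding zeta_q2_geometric_part_def by (intro order_trans[OF norm_sum] sum_mono)
  also have "\<dots> = ?P * ((\<Sum>k<Suc n. exp ((Re t + k) * ln q)) / \<epsilon>)"
    by (simp only: sum_distrib_left sum_divide_distrib)
  finally show ?thesis .
qed

lemma norm_zeta_q2_expansion_le:
  fixes \<epsilon> Y :: real
  assumes q: "0 < q" "q < 1" and "\<epsilon> > 0" and t: "Re t + Suc n > 0"
    and away: "\<And>k. k \<le> n \<Longrightarrow> \<epsilon> \<le> cmod (1 - qpow q (t + of_nat k))"
    and Y: "cmod s \<le> Y"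
  defines "\<rho> \<equiv> exp ((Re t + Suc n) * ln q)"
  shows "cmod (zeta_q2_expansion q s (Suc n) t) \<le> exp (Re s * ln (1 - q)) * (Y + Suc n) ^ Suc n *
    ((\<Sum>k<Suc n. exp ((Re t + k) * ln q)) / \<epsilon> +
     exp (\<bar>Re s + Suc n\<bar> * - ln (1 - q)) / fact n * (\<rho> / (1 - \<rho>)))"
proof -
  let ?P = "(Y + Suc n) ^ Suc n" and ?E = "exp (\<bar>Re s + Suc n\<bar> * - ln (1 - q)) / fact n"
  have "0 < \<rho>" "\<rho> < 1"
    unfolding \<rho>_def using q t by (simp_all add: mult_pos_neg)
  have "cmod (zeta_q2_tail q s (Suc n) t) \<le> binomial_remainder_coeff q s n * (\<rho> / (1 - \<rho>))"
    unfolding \<rho>_def by (rule norm_zeta_q2_tail_le[OF q t])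
  also have "\<dots> \<le> ?P * ?E * (\<rho> / (1 - \<rho>))"
    unfolding binomial_remainder_coeff_def
    using norm_pochhammer_le_power[OF order.refl Y, of "Suc n"] \<open>0 < \<rho>\<close> \<open>\<rho> < 1\<close>
    by (intro mult_right_mono) (simp_all add: divide_right_mono)
  finally have tail: "cmod (zeta_q2_tail q s (Suc n) t) \<le> ?P * ?E * (\<rho> / (1 - \<rho>))" .
  have norm_factor: "cmod (exp (s * of_real (ln (1 - q)))) = exp (Re s * ln (1 - q))"
    by simp
  have "cmod (zeta_q2_expansion q s (Suc n) t) \<le> exp (Re s * ln (1 - q)) *
      (?P * ((\<Sum>k<Suc n. exp ((Re t + k) * ln q)) / \<epsilon>) + ?P * ?E * (\<rho> / (1 - \<rho>)))"
    unfolding zeta_q2_expansion_def norm_mult norm_factor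
    using norm_zeta_q2_geometric_part_le[OF \<open>\<epsilon> > 0\<close> away Y]
    by (intro mult_left_mono order_trans[OF norm_triangle_ineq add_mono[OF _ tail]]) simp_all
  then show ?thesis
    by (simp only: distrib_left mult.assoc)
qed

lemma INF_qpow_le:
  assumes "r \<ge> -1"
  shows "(INF r\<in>{-1::int..}. cmod (1 - qpow q (of_int r + s))) \<le> cmod (1 - qpow q (of_int r + s))"
  by (rule cINF_lower) (auto intro: bdd_belowI2[where m=0] simp: assms)

lemma notin_zq_poles_if_INF_pos:
  assumes q: "0 < q" "q < 1" and pos: "(INF r\<in>{-1::int..}. cmod (1 - qpow q (of_int r + s))) > 0"
  shows "s - 1 \<notin> zq_poles q"
proof
  assume "s - 1 \<in> zq_poles q"
  then obtain n :: nat where "qpow q (of_int (int n - 1) + s) = 1"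
    using zq_poles_iff_qpow_eq_1[OF q] by (auto simp: algebra_simps)
  with INF_qpow_le[of "int n - 1" q s] pos show False
    by simp
qed

lemma zeta_q_polynomial_bound:
  fixes \<epsilon> q \<sigma> :: real
  assumes "\<epsilon> > 0" and q: "0 < q" "q < 1" and n: "\<sigma> - 1 + Suc n > 0"
  shows "\<exists>K\<ge>0. \<forall>v. (INF r\<in>{-1::int..}. cmod (1 - qpow q (of_int r + Complex \<sigma> v))) > \<epsilon> \<longrightarrow>
           cmod (zeta_q q (Complex \<sigma> v)) \<le> K * (\<bar>\<sigma>\<bar> + \<bar>v\<bar> + Suc n) ^ Suc n"
proof -
  define \<rho> where "\<rho> = exp ((\<sigma> - 1 + Suc n) * ln q)"
  define K where "K = exp (\<sigma> * ln (1 - q)) *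
    ((\<Sum>k<Suc n. exp ((\<sigma> - 1 + k) * ln q)) / \<epsilon> +
     exp (\<bar>\<sigma> + Suc n\<bar> * - ln (1 - q)) / fact n * (\<rho> / (1 - \<rho>)))"
  have "\<rho> < 1"
    unfolding \<rho>_def using q n by (simp add: mult_pos_neg)
  moreover have "\<rho> > 0"
    unfolding \<rho>_def by simp
  ultimately have "K \<ge> 0"
    unfolding K_def using \<open>\<epsilon> > 0\<close>
    by (intro mult_nonneg_nonneg add_nonneg_nonneg divide_nonneg_nonneg sum_nonneg) auto
  moreover have "cmod (zeta_q q (Complex \<sigma> v)) \<le> K * (\<bar>\<sigma>\<bar> + \<bar>v\<bar> + Suc n) ^ Suc n"
    if away: "(INF r\<in>{-1::int..}. cmod (1 - qpow q (of_int r + Complex \<sigma> v))) > \<epsilon>" for v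
  proof -
    define s where "s = Complex \<sigma> v"
    have "s - 1 \<notin> zq_poles q"
      using notin_zq_poles_if_INF_pos[OF q] away \<open>\<epsilon> > 0\<close> unfolding s_def by simp
    then have "zeta_q q s = zeta_q2_expansion q s (Suc n) (s - 1)"
      unfolding zeta_q_def using n by (intro zeta_q2_eq_expansion[OF q]) (simp add: s_def)
    moreover have "\<epsilon> \<le> cmod (1 - qpow q (s - 1 + of_nat k))" for k
      using INF_qpow_le[of "int k - 1" q s] away unfolding s_def by (simp add: algebra_simps)
    moreover have "cmod s \<le> \<bar>\<sigma>\<bar> + \<bar>v\<bar>"
      unfolding s_def using cmod_le[of "Complex \<sigma> v"] by simp
    ultimately show ?thesis
      using norm_zeta_q2_expansion_le[OF q \<open>\<epsilon> > 0\<close>, of "s - 1" n s "\<bar>\<sigma>\<bar> + \<bar>v\<bar>"] n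
      unfolding s_def K_def \<rho>_def by (simp add: mult_ac)
  qed
  ultimately show ?thesis
    by blast
qed

lemma zeta_q_linear_bound:
  fixes \<epsilon> q :: real
  assumes "\<epsilon> > 0" and q: "0 < q" "q < 1"
  shows "\<exists>C>0. \<forall>v. \<bar>v\<bar> \<ge> 1 \<longrightarrow>
           (INF r\<in>{-1::int..}. cmod (1 - qpow q (of_int r + Complex 1 v))) > \<epsilon> \<longrightarrow>
           cmod (zeta_q q (Complex 1 v)) \<le> C * \<bar>v\<bar>"
proof -
  obtain K where "K \<ge> 0" and K:
    "\<And>v. (INF r\<in>{-1::int..}. cmod (1 - qpow q (of_int r + Complex 1 v))) > \<epsilon> \<Longrightarrow>
      cmod (zeta_q q (Complex 1 v)) \<le> K * (1 + \<bar>v\<bar> + 1)"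
    using zeta_q_polynomial_bound[OF assms, of 1 0] by auto
  have "cmod (zeta_q q (Complex 1 v)) \<le> (3 * K + 1) * \<bar>v\<bar>"
    if "\<bar>v\<bar> \<ge> 1" and "(INF r\<in>{-1::int..}. cmod (1 - qpow q (of_int r + Complex 1 v))) > \<epsilon>" for v
  proof -
    have "cmod (zeta_q q (Complex 1 v)) \<le> K * (1 + \<bar>v\<bar> + 1)"
      by (rule K[OF that(2)])
    also have "\<dots> \<le> K * (3 * \<bar>v\<bar>)"
      using \<open>K \<ge> 0\<close> that(1) by (intro mult_left_mono) auto
    also have "\<dots> \<le> (3 * K + 1) * \<bar>v\<bar>"
      by (simp add: algebra_simps)
    finally show ?thesis .
  qed
  moreover have "3 * K + 1 > 0"
    using \<open>K \<ge> 0\<close> by simp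
  ultimately show ?thesis
    by blast
qed

lemma power_le_fact_mult_exp:
  fixes x \<delta> :: real
  assumes "x \<ge> 0" "\<delta> > 0"
  shows "x ^ N \<le> fact N / \<delta> ^ N * exp (\<delta> * x)"
proof -
  have exp_series: "(\<lambda>n. (\<delta> * x) ^ n / fact n) sums exp (\<delta> * x)"
    using exp_converges[of "\<delta> * x"] by (simp add: divide_inverse mult.commute)
  have "(\<delta> * x) ^ N / fact N \<le> exp (\<delta> * x)"
    using sum_le_suminf[OF sums_summable[OF exp_series], of "{N}"] assms
    by (simp add: sums_unique[OF exp_series, symmetric])
  then show ?thesis
    using assms by (simp add: field_simps)
qed

lemma zeta_q_subexponential_bound:
  fixes \<epsilon> q \<sigma> \<delta> :: real
  assumes "\<epsilon> > 0" and q: "0 < q" "q < 1" and "\<delta> > 0"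
  shows "\<exists>C>0. \<forall>v. (INF r\<in>{-1::int..}. cmod (1 - qpow q (of_int r + Complex \<sigma> v))) > \<epsilon> \<longrightarrow>
           cmod (zeta_q q (Complex \<sigma> v)) \<le> C * exp (\<delta> * \<bar>v\<bar>)"
proof -
  define N where "N = Suc (nat \<lceil>1 - \<sigma>\<rceil>)"
  have "\<sigma> - 1 + Suc (nat \<lceil>1 - \<sigma>\<rceil>) > 0"
    using real_nat_ceiling_ge[of "1 - \<sigma>"] by simp
  then obtain K where "K \<ge> 0" and K:
    "\<And>v. (INF r\<in>{-1::int..}. cmod (1 - qpow q (of_int r + Complex \<sigma> v))) > \<epsilon> \<Longrightarrow>
      cmod (zeta_q q (Complex \<sigma> v)) \<le> K * (\<bar>\<sigma>\<bar> + \<bar>v\<bar> + N) ^ N"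
    using zeta_q_polynomial_bound[OF assms(1-3)] unfolding N_def by blast
  define C where "C = K * (fact N / \<delta> ^ N * exp (\<delta> * (\<bar>\<sigma>\<bar> + N))) + 1"
  have "cmod (zeta_q q (Complex \<sigma> v)) \<le> C * exp (\<delta> * \<bar>v\<bar>)"
    if "(INF r\<in>{-1::int..}. cmod (1 - qpow q (of_int r + Complex \<sigma> v))) > \<epsilon>" for v
  proof -
    have "cmod (zeta_q q (Complex \<sigma> v)) \<le> K * (\<bar>\<sigma>\<bar> + N + \<bar>v\<bar>) ^ N"
      using K[OF that] by (simp add: add_ac)
    also have "\<dots> \<le> K * (fact N / \<delta> ^ N * exp (\<delta> * (\<bar>\<sigma>\<bar> + N + \<bar>v\<bar>)))"
      using power_le_fact_mult_exp[of "\<bar>\<sigma>\<bar> + N + \<bar>v\<bar>" \<delta> N] \<open>\<delta> > 0\<close> \<open>K \<ge> 0\<close>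
      by (intro mult_left_mono) auto
    also have "\<dots> \<le> C * exp (\<delta> * \<bar>v\<bar>)"
      unfolding C_def by (simp add: exp_add algebra_simps)
    finally show ?thesis .
  qed
  moreover have "C > 0"
    unfolding C_def using \<open>K \<ge> 0\<close> \<open>\<delta> > 0\<close> by (simp add: add_nonneg_pos)
  ultimately show ?thesis
    by blast
qed

lemma zeta_q_bounded:
  assumes q: "0 < q" "q < 1" and "\<sigma> > 1"
  shows "\<exists>C>0. \<forall>v. cmod (zeta_q q (Complex \<sigma> v)) \<le> C"
proof -
  define \<rho> where "\<rho> = exp ((\<sigma> - 1) * ln q)"
  have "\<rho> < 1"
    unfolding \<rho>_def using q \<open>\<sigma> > 1\<close> by (simp add: mult_pos_neg)
  then have "\<rho> / (1 - \<rho>) > 0"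
    by (simp add: \<rho>_def)
  moreover have "cmod (zeta_q q (Complex \<sigma> v)) \<le> \<rho> / (1 - \<rho>)" for v
    using norm_zeta_q2_series_le[OF q, of "Complex \<sigma> v - 1" "Complex \<sigma> v"] zeta_q2_eq_series[OF q]
      \<open>\<sigma> > 1\<close> unfolding zeta_q_def \<rho>_def by simp
  ultimately show ?thesis
    by blast
qed

theorem corollary1p2:
  fixes \<epsilon> q \<sigma> :: real
  assumes "\<epsilon> > 0" and "0 < q" and "q < 1"
  shows "\<exists>C V0. C > 0 \<and> V0 > 0 \<and>
    (\<forall>v::real. \<bar>v\<bar> \<ge> V0 \<longrightarrow>
       (INF r\<in>{-1::int..}. cmod (1 - qpow q (of_int r + Complex \<sigma> v))) > \<epsilon> \<longrightarrow>
       cmod (zeta_q q (Complex \<sigma> v)) \<le>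
         (if \<sigma> > 1 then C
          else if \<sigma> = 1 then C * \<bar>v\<bar>
          else C * exp (- (\<sigma> - 1) * (1 + pi / 2) * \<bar>v\<bar>)))"
proof -
  have q: "0 < q" "q < 1"
    using assms by auto
  consider "\<sigma> > 1" | "\<sigma> = 1" | "\<sigma> < 1"
    by linarith
  then show ?thesis
  proof cases
    case 1
    with zeta_q_bounded[OF q] obtain C where "C > 0" "\<And>v. cmod (zeta_q q (Complex \<sigma> v)) \<le> C"
      by blast
    with 1 show ?thesis
      by (intro exI[of _ C] exI[of _ 1]) simp
  next
    case 2
    with zeta_q_linear_bound[OF assms(1) q] obtain C where "C > 0" and
      "\<And>v. \<bar>v\<bar> \<ge> 1 \<Longrightarrow> (INF r\<in>{-1::int..}. cmod (1 - qpow q (of_int r + Complex \<sigma> v))) > \<epsilon> \<Longrightarrow>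
         cmod (zeta_q q (Complex \<sigma> v)) \<le> C * \<bar>v\<bar>"
      by blast
    with 2 show ?thesis
      by (intro exI[of _ C] exI[of _ 1]) simp
  next
    case 3
    then have "(1 - \<sigma>) * (1 + pi / 2) > 0"
      by (simp add: add_pos_pos)
    with zeta_q_subexponential_bound[OF assms(1) q] obtain C where "C > 0" and
      "\<And>v. (INF r\<in>{-1::int..}. cmod (1 - qpow q (of_int r + Complex \<sigma> v))) > \<epsilon> \<Longrightarrow>
         cmod (zeta_q q (Complex \<sigma> v)) \<le> C * exp ((1 - \<sigma>) * (1 + pi / 2) * \<bar>v\<bar>)"
      by blast
    with 3 show ?thesis
      by (intro exI[of _ C] exI[of _ 1]) (simp add: algebra_simps)
  qed
qed

end
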